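(* Let $n\ge 2$ be an integer. For each sufficiently large real number $N$ there is a measurable set $S=S_N\subset[0,1]^n$ with $|S|\ge\frac34$ such that for each $(y_1,\ldots,y_n)\in S$ there exists an integer $p\in[4^{-n-1}N,N+2]$ satisfying $$\max_{1\le i\le n}\|py_i\|\le\frac1{N^{1/n}}.$$
   Context: $\|x\|$ denotes the distance from the real number $x$ to the nearest integer; $|S|$ denotes Lebesgue measure. *)

theory Defs
  imports "HOL-Analysis.Analysis"
begin

definition dist_int :: "real \<Rightarrow> real" where
  "dist_int x = (INF k::int. \<bar>x - of_int k\<bar>)"

end

theory Submission
  imports Defs
begin

text \<open>
  Put \<open>\<delta> = N powr (-1/n)\<close> and \<open>c = 4 powr (-n-1)\<close>. By Dirichlet's theorem (the
  pigeonhole principle on a fine grid of the torus), every \<open>y\<close> has a denominator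
  \<open>1 \<le> p < N + 1\<close> with all \<open>\<parallel>p y\<^sub>i\<parallel> \<le> \<delta>\<close>. If such a \<open>p\<close> is below \<open>c N\<close>, then \<open>y\<close>
  lies in one of the \<open>(p+1)\<^sup>n\<close> cubes of radius \<open>\<delta>/p\<close> around the points \<open>j/p\<close> of
  \<open>[0,1]\<^sup>n\<close>, of total measure at most \<open>(4\<delta>)\<^sup>n = 4\<^sup>n/N\<close>; summing over \<open>p < c N\<close> gives at
  most \<open>c 4\<^sup>n = 1/4\<close>, and \<open>S\<close> is the rest of the unit cube. The argument does not
  need \<open>n \<ge> 2\<close>.
\<close>

lemma dist_int_eq_round: "dist_int x = \<bar>x - of_int (round x)\<bar>"
  unfolding dist_int_def
proof (rule antisym)
  show "(INF k::int. \<bar>x - of_int k\<bar>) \<le> \<bar>x - of_int (round x)\<bar>"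
    by (rule cINF_lower) (auto intro: bdd_belowI[where m=0])
  show "\<bar>x - of_int (round x)\<bar> \<le> (INF k::int. \<bar>x - of_int k\<bar>)"
  proof (rule cINF_greatest)
    fix k :: int
    have round: "\<bar>of_int (round x) - x\<bar> \<le> 1/2" by (rule of_int_round_abs_le)
    show "\<bar>x - of_int (round x)\<bar> \<le> \<bar>x - of_int k\<bar>"
    proof (cases "k = round x")
      case False
      then have "\<bar>real_of_int k - of_int (round x)\<bar> \<ge> 1"
        by (metis of_int_1_le_iff of_int_abs of_int_diff zero_less_abs_iff int_one_le_iff_zero_less eq_iff_diff_eq_0)
      with round show ?thesis by linarith
    qed simp
  qed simp
qed

lemma dist_int_le_iff: "dist_int x \<le> d \<longleftrightarrow> (\<exists>k::int. \<bar>x - of_int k\<bar> \<le> d)"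
proof
  show "dist_int x \<le> d \<Longrightarrow> \<exists>k::int. \<bar>x - of_int k\<bar> \<le> d"
    by (auto simp: dist_int_eq_round)
  assume "\<exists>k::int. \<bar>x - of_int k\<bar> \<le> d"
  then obtain k :: int where "\<bar>x - of_int k\<bar> \<le> d" ..
  moreover have "dist_int x \<le> \<bar>x - of_int k\<bar>"
    unfolding dist_int_def by (rule cINF_lower) (auto intro: bdd_belowI[where m=0])
  ultimately show "dist_int x \<le> d" by linarith
qed

definition grid_arc :: "nat \<Rightarrow> real \<Rightarrow> real \<Rightarrow> nat set" where
  "grid_arc L c \<delta> = {j\<in>{0..<L}. \<exists>m::int. c + m \<le> real j / L \<and> real j / L < c + m + \<delta>}"

lemma grid_arc_overlap:
  assumes "j \<in> grid_arc L c \<delta>" "j \<in> grid_arc L c' \<delta>"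
  shows "dist_int (c' - c) \<le> \<delta>"
proof -
  obtain m m' :: int where
    "c + m \<le> real j / L" "real j / L < c + m + \<delta>" "c' + m' \<le> real j / L" "real j / L < c' + m' + \<delta>"
    using assms unfolding grid_arc_def by blast
  then have "\<bar>(c' - c) - of_int (m - m')\<bar> \<le> \<delta>" by simp
  then show ?thesis unfolding dist_int_le_iff by blast
qed

text \<open>The arc contains the consecutive grid points \<open>(\<lceil>L c\<rceil> + t) mod L\<close>, \<open>t < \<lfloor>\<delta> L\<rfloor>\<close>.\<close>
lemma card_grid_arc_ge:
  assumes "0 < \<delta>" "\<delta> \<le> 1" "0 < L"
  shows "nat \<lfloor>\<delta> * L\<rfloor> \<le> card (grid_arc L c \<delta>)"
proof -
  define a where "a = \<lceil>L * c\<rceil>"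
  define T where "T = nat \<lfloor>\<delta> * L\<rfloor>"
  define f where "f t = nat ((a + int t) mod int L)" for t
  have "\<delta> * L \<le> real L" using assms by (simp add: mult_left_le_one_le)
  then have "T \<le> L" unfolding T_def by linarith
  have "inj_on f {0..<T}"
  proof (rule inj_onI)
    fix t t' assume t: "t \<in> {0..<T}" "t' \<in> {0..<T}" and "f t = f t'"
    then have "(a + int t) mod int L = (a + int t') mod int L"
      unfolding f_def using assms(3) by (metis eq_nat_nat_iff of_nat_0_less_iff pos_mod_sign)
    then have "int L dvd (a + int t) - (a + int t')"
      by (simp only: mod_eq_dvd_iff)
    then have "int L dvd int t - int t'" by simp
    moreover have "\<bar>int t - int t'\<bar> < int L" using t \<open>T \<le> L\<close> by auto
    ultimately show "t = t'"
      using dvd_imp_le_int[of "int t - int t'" "int L"] by fastforce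
  qed
  moreover have "f ` {0..<T} \<subseteq> grid_arc L c \<delta>"
  proof
    fix j assume "j \<in> f ` {0..<T}"
    then obtain t where t: "t < T" "j = f t" by auto
    define z where "z = a + int t"
    have z_mod: "0 \<le> z mod int L" "z mod int L < int L" using assms(3) by simp_all
    have j: "real j = of_int z - real L * of_int (z div int L)" "j < L"
    proof -
      have "real j = of_int (z mod int L)" using t z_mod unfolding f_def z_def by simp
      also have "z mod int L = z - int L * (z div int L)" by (rule minus_mult_div_eq_mod[symmetric])
      finally show "real j = of_int z - real L * of_int (z div int L)" by simp
      show "j < L" using t z_mod unfolding f_def z_def by auto
    qed
    have "L * c \<le> of_int a" "of_int a < L * c + 1" unfolding a_def by linarith+
    moreover have "real t + 1 \<le> \<delta> * L" using t unfolding T_def by linarith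
    ultimately have "c \<le> of_int z / L" "of_int z / L < c + \<delta>"
      using assms(3) unfolding z_def by (simp_all add: field_simps)
    moreover have "real j / L = of_int z / L - of_int (z div int L)"
      using j assms(3) by (simp add: field_simps)
    ultimately show "j \<in> grid_arc L c \<delta>"
      unfolding grid_arc_def using j(2) by (intro CollectI conjI exI[of _ "- (z div int L)"]) auto
  qed
  ultimately have "card (f ` {0..<T}) \<le> card (grid_arc L c \<delta>)"
    by (intro card_mono) (auto simp: grid_arc_def)
  then show ?thesis using card_image[OF \<open>inj_on f {0..<T}\<close>] unfolding T_def by simp
qed

lemma pigeonhole_overlap:
  assumes "finite I" "finite U" "\<And>i. i \<in> I \<Longrightarrow> A i \<subseteq> U" "card U < (\<Sum>i\<in>I. card (A i))"
  shows "\<exists>i\<in>I. \<exists>j\<in>I. i \<noteq> j \<and> A i \<inter> A j \<noteq> {}"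
proof (rule ccontr)
  assume "\<not> ?thesis"
  moreover have "finite (A i)" if "i \<in> I" for i
    using assms(2,3) that by (meson rev_finite_subset)
  ultimately have "card (\<Union>i\<in>I. A i) = (\<Sum>i\<in>I. card (A i))"
    using assms(1) by (intro card_UN_disjoint) auto
  moreover have "card (\<Union>i\<in>I. A i) \<le> card U"
    using assms(2,3) by (intro card_mono) auto
  ultimately show False using assms(4) by simp
qed

lemma exists_grid_size:
  assumes "0 < \<delta>" "(real K + 1) * \<delta> ^ n > 1"
  shows "\<exists>L>0. real L ^ n < (real K + 1) * real (nat \<lfloor>\<delta> * L\<rfloor>) ^ n"
proof -
  have "(\<lambda>L. (real K + 1) * (\<delta> - 1 / real L) ^ n) \<longlonglongrightarrow> (real K + 1) * (\<delta> - 0) ^ n"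
    by (intro tendsto_intros lim_const_over_n)
  from order_tendstoD(1)[OF this]
  have "eventually (\<lambda>L. (real K + 1) * (\<delta> - 1 / real L) ^ n > 1) sequentially"
    using assms(2) by simp
  moreover have "eventually (\<lambda>L. 1 / real L < \<delta>) sequentially"
    by (rule order_tendstoD(2)[OF lim_const_over_n[of 1] assms(1)])
  moreover have "eventually (\<lambda>L. 0 < L) sequentially"
    by simp
  ultimately obtain L where L: "0 < L" "1 / real L < \<delta>" "(real K + 1) * (\<delta> - 1 / real L) ^ n > 1"
    by (metis (mono_tags, lifting) eventually_conj_iff eventually_sequentially order.refl)
  have "real L ^ n < real L ^ n * ((real K + 1) * (\<delta> - 1 / real L) ^ n)"
    using L by simp
  also have "\<dots> = (real K + 1) * (\<delta> * L - 1) ^ n"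
    using L(1) by (simp add: power_mult_distrib[symmetric] algebra_simps)
  also have "\<dots> \<le> (real K + 1) * real (nat \<lfloor>\<delta> * L\<rfloor>) ^ n"
  proof -
    have "1 < \<delta> * L" using L by (simp add: field_simps)
    then have "0 \<le> \<delta> * L - 1" "\<delta> * L - 1 \<le> real (nat \<lfloor>\<delta> * L\<rfloor>)" by linarith+
    then show ?thesis by (intro mult_left_mono power_mono) auto
  qed
  finally show ?thesis using L(1) by blast
qed

lemma dirichlet_simultaneous:
  fixes y :: "real^'n"
  assumes "0 < \<delta>" "\<delta> \<le> 1" "(real K + 1) * \<delta> ^ CARD('n) > 1"
  shows "\<exists>p::int. 1 \<le> p \<and> p \<le> int K \<and> (\<forall>i. dist_int (of_int p * y$i) \<le> \<delta>)"
proof -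
  obtain L where L: "0 < L" "real L ^ CARD('n) < (real K + 1) * real (nat \<lfloor>\<delta> * L\<rfloor>) ^ CARD('n)"
    using exists_grid_size[OF assms(1,3)] by blast
  define G where "G k = (\<Pi>\<^sub>E i\<in>UNIV. grid_arc L (real k * y$i) \<delta>)" for k :: nat
  have "card (G k) \<ge> nat \<lfloor>\<delta> * L\<rfloor> ^ CARD('n)" for k
  proof -
    have "nat \<lfloor>\<delta> * L\<rfloor> ^ CARD('n) = (\<Prod>i\<in>(UNIV::'n set). nat \<lfloor>\<delta> * L\<rfloor>)" by simp
    also have "\<dots> \<le> (\<Prod>i\<in>UNIV. card (grid_arc L (real k * y$i) \<delta>))"
      by (intro prod_mono conjI card_grid_arc_ge assms(1,2) L(1)) simp
    also have "\<dots> = card (G k)" unfolding G_def by (simp add: card_PiE)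
    finally show ?thesis .
  qed
  then have "real (\<Sum>k\<in>{0..K}. nat \<lfloor>\<delta> * L\<rfloor> ^ CARD('n)) \<le> real (\<Sum>k\<in>{0..K}. card (G k))"
    by (intro of_nat_mono sum_mono)
  then have "real (card ((UNIV::'n set) \<rightarrow>\<^sub>E {0..<L})) < real (\<Sum>k\<in>{0..K}. card (G k))"
    using L(2) by (simp add: card_PiE algebra_simps)
  then have card_lt: "card ((UNIV::'n set) \<rightarrow>\<^sub>E {0..<L}) < (\<Sum>k\<in>{0..K}. card (G k))"
    by (simp only: of_nat_less_iff)
  have "\<exists>k\<in>{0..K}. \<exists>k'\<in>{0..K}. k \<noteq> k' \<and> G k \<inter> G k' \<noteq> {}"
    by (rule pigeonhole_overlap[OF _ _ _ card_lt]) (auto simp: finite_PiE G_def grid_arc_def)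
  then obtain k k' where k: "k < k'" "k' \<le> K" "G k \<inter> G k' \<noteq> {}"
    by (metis Int_commute atLeastAtMost_iff linorder_neqE_nat)
  then obtain f where f: "f i \<in> grid_arc L (real k * y$i) \<delta>" "f i \<in> grid_arc L (real k' * y$i) \<delta>" for i
    unfolding G_def by blast
  have "dist_int (of_int (int k' - int k) * y$i) \<le> \<delta>" for i
    using grid_arc_overlap[OF f] by (simp add: algebra_simps)
  then show ?thesis
    using k by (intro exI[of _ "int k' - int k"]) auto
qed

lemma dirichlet_simultaneous_real:
  fixes y :: "real^'n" and \<delta> N :: real
  assumes "0 < \<delta>" "\<delta> \<le> 1" "N * \<delta> ^ CARD('n) = 1"
  shows "\<exists>p::int. 1 \<le> p \<and> p < N + 1 \<and> (\<forall>i. dist_int (of_int p * y$i) \<le> \<delta>)"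
proof -
  have "0 < \<delta> ^ CARD('n)" using assms(1) by simp
  then have "0 < N" using assms(3) by (metis zero_less_mult_pos2 zero_less_one)
  have "N < real (nat \<lceil>N\<rceil>) + 1" by linarith
  then have "N * \<delta> ^ CARD('n) < (real (nat \<lceil>N\<rceil>) + 1) * \<delta> ^ CARD('n)"
    using \<open>0 < \<delta> ^ CARD('n)\<close> by (rule mult_strict_right_mono)
  then obtain p :: int where "1 \<le> p" "p \<le> int (nat \<lceil>N\<rceil>)" "\<forall>i. dist_int (of_int p * y$i) \<le> \<delta>"
    using dirichlet_simultaneous[OF assms(1,2), where K = "nat \<lceil>N\<rceil>" and y = y] assms(3) by auto
  moreover have "real_of_int p < N + 1"
    using \<open>p \<le> int (nat \<lceil>N\<rceil>)\<close> \<open>0 < N\<close> by linarith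
  ultimately show ?thesis by blast
qed

lemma measure_cube_cart:
  assumes "0 \<le> r"
  shows "measure lebesgue (cbox (\<chi> i. a i - r) (\<chi> i. a i + r) :: (real^'n) set) = (2 * r) ^ CARD('n)"
proof -
  have "(\<chi> i. a i) \<in> (cbox (\<chi> i. a i - r) (\<chi> i. a i + r) :: (real^'n) set)"
    using assms by (simp add: mem_box_cart)
  then have "cbox (\<chi> i. a i - r) (\<chi> i. a i + r) \<noteq> ({} :: (real^'n) set)" by blast
  then show ?thesis by (simp add: content_cbox_cart)
qed

definition lattice_cubes :: "int \<Rightarrow> real \<Rightarrow> (real^'n) set" where
  "lattice_cubes p \<delta> = (\<Union>j\<in>UNIV \<rightarrow>\<^sub>E {0..nat p}.
      cbox (\<chi> i. real (j i) / p - \<delta> / p) (\<chi> i. real (j i) / p + \<delta> / p))"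

lemma lattice_cubes_fmeasurable: "lattice_cubes p \<delta> \<in> fmeasurable lebesgue"
  unfolding lattice_cubes_def by (intro fmeasurable.finite_UN finite_PiE) auto

lemma measure_lattice_cubes_le:
  assumes "1 \<le> p" "0 \<le> \<delta>"
  shows "measure lebesgue (lattice_cubes p \<delta> :: (real^'n) set) \<le> (4 * \<delta>) ^ CARD('n)"
proof -
  have p: "real_of_int p \<ge> 1" using assms(1) by simp
  let ?J = "(UNIV::'n set) \<rightarrow>\<^sub>E {0..nat p}"
  let ?cube = "\<lambda>j. cbox (\<chi> i. real (j i) / p - \<delta> / p) (\<chi> i. real (j i) / p + \<delta> / p) :: (real^'n) set"
  have cube: "measure lebesgue (?cube j) = (2 * (\<delta> / p)) ^ CARD('n)" for j
    using assms by (intro measure_cube_cart) simp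
  have "measure lebesgue (lattice_cubes p \<delta> :: (real^'n) set) \<le> (\<Sum>j\<in>?J. measure lebesgue (?cube j))"
    unfolding lattice_cubes_def by (rule measure_UNION_le) (auto intro: finite_PiE)
  also have "\<dots> = (\<Sum>j\<in>?J. (2 * (\<delta> / p)) ^ CARD('n))"
    by (simp only: cube)
  also have "\<dots> = real (card ?J) * (2 * (\<delta> / p)) ^ CARD('n)"
    by simp
  also have "real (card ?J) = (real_of_int p + 1) ^ CARD('n)"
    using assms(1) by (simp add: card_PiE add.commute)
  also have "\<dots> * (2 * (\<delta> / p)) ^ CARD('n) = ((real_of_int p + 1) * (2 * (\<delta> / p))) ^ CARD('n)"
    by (rule power_mult_distrib[symmetric])
  also have "\<dots> \<le> (4 * \<delta>) ^ CARD('n)"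
  proof (rule power_mono)
    have "(real_of_int p + 1) * (2 * (\<delta> / p)) = 2 * \<delta> + 2 * (\<delta> / p)"
      using p by (simp add: field_simps)
    also have "\<delta> / p \<le> \<delta>"
      using p assms(2) by (simp add: divide_le_eq mult_le_cancel_left1)
    finally show "(real_of_int p + 1) * (2 * (\<delta> / p)) \<le> 4 * \<delta>" by simp
  qed (use assms p in simp)
  finally show ?thesis .
qed

lemma lattice_cubes_cover:
  assumes "1 \<le> p" "\<delta> < 1" "y \<in> cbox 0 (1::real^'n)" "\<forall>i. dist_int (of_int p * y$i) \<le> \<delta>"
  shows "y \<in> lattice_cubes p \<delta>"
proof -
  obtain k where k: "\<And>i. \<bar>of_int p * y$i - of_int (k i)\<bar> \<le> \<delta>"
    using assms(4) unfolding dist_int_le_iff by metis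
  have p: "real_of_int p > 0" using assms(1) by simp
  have py: "0 \<le> of_int p * y$i" "of_int p * y$i \<le> of_int p" for i
    using assms(1,3) by (auto simp: mem_box_cart mult_left_le)
  have k_range: "0 \<le> k i \<and> k i \<le> p" for i
  proof -
    have "real_of_int (-1) < of_int (k i)" "real_of_int (k i) < of_int (p + 1)"
      using py[of i] k[of i] assms(2) unfolding abs_le_iff by simp_all
    then show ?thesis unfolding of_int_less_iff by linarith
  qed
  then have "(\<lambda>i. nat (k i)) \<in> (UNIV \<rightarrow>\<^sub>E {0..nat p})"
    by (auto simp: nat_mono)
  moreover have "(of_int (k i) - \<delta>) / p \<le> y$i \<and> y$i \<le> (of_int (k i) + \<delta>) / p" for i
  proof -
    have "of_int (k i) - \<delta> \<le> y$i * p" "y$i * p \<le> of_int (k i) + \<delta>"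
      using k[of i] unfolding abs_le_iff by (simp_all add: mult.commute)
    then show ?thesis using p by (simp add: divide_le_eq le_divide_eq)
  qed
  then have "y \<in> cbox (\<chi> i. real (nat (k i)) / p - \<delta> / p) (\<chi> i. real (nat (k i)) / p + \<delta> / p)"
    using k_range by (simp add: mem_box_cart diff_divide_distrib add_divide_distrib)
  ultimately show ?thesis unfolding lattice_cubes_def by blast
qed

lemma measure_unit_cube_Diff_ge:
  assumes "U \<in> fmeasurable lebesgue"
  shows "measure lebesgue (cbox 0 (1::real^'n) - U) \<ge> 1 - measure lebesgue U"
proof -
  have "(0::real^'n) \<in> cbox 0 1" by (simp add: mem_box_cart)
  then have "cbox 0 (1::real^'n) \<noteq> {}" by blast
  then have "measure lebesgue (cbox 0 (1::real^'n)) = 1"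
    by (simp add: content_cbox_cart)
  moreover have "measure lebesgue (cbox 0 (1::real^'n)) - measure lebesgue U \<le> measure lebesgue (cbox 0 1 - U)"
    using assms by (intro measure_diff_le_measure_setdiff) simp_all
  ultimately show ?thesis by linarith
qed

lemma measure_UN_lattice_cubes_le:
  assumes "finite P" "\<And>p. p \<in> P \<Longrightarrow> 1 \<le> p" "0 \<le> \<delta>"
  shows "measure lebesgue (\<Union>p\<in>P. lattice_cubes p \<delta> :: (real^'n) set) \<le> real (card P) * (4 * \<delta>) ^ CARD('n)"
proof -
  have "measure lebesgue (\<Union>p\<in>P. lattice_cubes p \<delta> :: (real^'n) set)
      \<le> (\<Sum>p\<in>P. measure lebesgue (lattice_cubes p \<delta> :: (real^'n) set))"
    using assms(1) by (intro measure_UNION_le) (auto intro: fmeasurableD lattice_cubes_fmeasurable)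
  also have "\<dots> \<le> (\<Sum>p\<in>P. (4 * \<delta>) ^ CARD('n))"
    using assms by (intro sum_mono measure_lattice_cubes_le) auto
  finally show ?thesis by simp
qed

definition small_denominator_cubes :: "real \<Rightarrow> real \<Rightarrow> real \<Rightarrow> (real^'n) set" where
  "small_denominator_cubes c N \<delta> = (\<Union>p\<in>{1..<\<lceil>c * N\<rceil>}. lattice_cubes p \<delta>)"

lemma small_denominator_cubes_fmeasurable: "small_denominator_cubes c N \<delta> \<in> fmeasurable lebesgue"
  unfolding small_denominator_cubes_def by (intro fmeasurable.finite_UN lattice_cubes_fmeasurable) auto

lemma measure_small_denominator_cubes_le:
  assumes "0 < c" "0 < \<delta>" "N * \<delta> ^ CARD('n) = 1"
  shows "measure lebesgue (small_denominator_cubes c N \<delta> :: (real^'n) set) \<le> c * 4 ^ CARD('n)"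
proof -
  have "0 < \<delta> ^ CARD('n)" using assms(2) by simp
  then have "0 < N" using assms(3) by (metis zero_less_mult_pos2 zero_less_one)
  then have "0 \<le> \<lceil>c * N\<rceil> - 1" "\<lceil>c * N\<rceil> - 1 < c * N"
    using assms(1) by (simp_all add: zero_le_ceiling) linarith
  then have card: "real (card {1..<\<lceil>c * N\<rceil>}) \<le> c * N"
    by simp
  have "measure lebesgue (small_denominator_cubes c N \<delta> :: (real^'n) set)
      \<le> real (card {1..<\<lceil>c * N\<rceil>}) * (4 * \<delta>) ^ CARD('n)"
    unfolding small_denominator_cubes_def using assms(2) by (intro measure_UN_lattice_cubes_le) auto
  also have "\<dots> \<le> c * N * (4 * \<delta>) ^ CARD('n)"
    using card assms(2) by (intro mult_right_mono) auto
  also have "\<dots> = c * 4 ^ CARD('n) * (N * \<delta> ^ CARD('n))"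
    by (simp add: power_mult_distrib mult_ac)
  finally show ?thesis using assms(3) by simp
qed

lemma dirichlet_outside_small_denominator_cubes:
  fixes y :: "real^'n" and c N \<delta> :: real
  assumes "0 < \<delta>" "\<delta> < 1" "N * \<delta> ^ CARD('n) = 1"
    and y: "y \<in> cbox 0 1 - small_denominator_cubes c N \<delta>"
  shows "\<exists>p::int. c * N \<le> p \<and> p < N + 1 \<and> (\<forall>i. dist_int (of_int p * y$i) \<le> \<delta>)"
proof -
  obtain p :: int where p: "1 \<le> p" "p < N + 1" "\<forall>i. dist_int (of_int p * y$i) \<le> \<delta>"
    using dirichlet_simultaneous_real[of \<delta> N y] assms(1-3) by auto
  have "y \<in> lattice_cubes p \<delta>"
    using lattice_cubes_cover[OF p(1) assms(2) _ p(3)] y by blast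
  then have "\<lceil>c * N\<rceil> \<le> p"
    using y p(1) unfolding small_denominator_cubes_def by auto
  then show ?thesis using p by (auto simp: ceiling_le_iff)
qed

theorem lemma3p1:
  assumes "CARD('n::finite) \<ge> 2"
  shows "\<exists>N0::real. \<forall>N\<ge>N0. \<exists>S::(real^'n) set.
           S \<subseteq> cbox 0 1 \<and> S \<in> sets lebesgue \<and> measure lebesgue S \<ge> 3/4 \<and>
           (\<forall>y\<in>S. \<exists>p::int. 4 powr (- real (CARD('n) + 1)) * N \<le> real_of_int p \<and>
                real_of_int p \<le> N + 2 \<and>
                (\<forall>i. dist_int (real_of_int p * y $ i) \<le> 1 / N powr (1 / real CARD('n))))"
proof (intro exI[of _ 2] allI impI)
  fix N :: real assume "N \<ge> 2"
  define \<delta> where "\<delta> = 1 / N powr (1 / real CARD('n))"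
  define c :: real where "c = 4 powr (- real (CARD('n) + 1))"
  define S where "S = (cbox 0 1 - small_denominator_cubes c N \<delta> :: (real^'n) set)"
  have "N powr (1 / real CARD('n)) > 1" "(N powr (1 / real CARD('n))) ^ CARD('n) = N"
    using \<open>N \<ge> 2\<close> by (simp_all add: powr_power)
  then have \<delta>: "0 < \<delta>" "\<delta> < 1" "N * \<delta> ^ CARD('n) = 1"
    unfolding \<delta>_def by (auto simp: divide_less_eq power_divide)
  have "c = 1 / 4 ^ (CARD('n) + 1)"
    unfolding c_def powr_minus_divide by (subst powr_realpow) auto
  then have "measure lebesgue (small_denominator_cubes c N \<delta> :: (real^'n) set) \<le> 1 / 4"
    using measure_small_denominator_cubes_le[of c \<delta> N, where 'n='n] \<delta> by simp
  then have "3/4 \<le> measure lebesgue S"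
    using measure_unit_cube_Diff_ge[OF small_denominator_cubes_fmeasurable[of c N \<delta>], where 'n = 'n] unfolding S_def by linarith
  moreover have "S \<in> sets lebesgue"
    unfolding S_def by (intro sets.Diff fmeasurableD small_denominator_cubes_fmeasurable) auto
  moreover have "\<exists>p::int. c * N \<le> p \<and> p \<le> N + 2 \<and> (\<forall>i. dist_int (of_int p * y$i) \<le> \<delta>)"
    if "y \<in> S" for y
    using dirichlet_outside_small_denominator_cubes[OF \<delta>] that unfolding S_def by fastforce
  ultimately show "\<exists>S::(real^'n) set. S \<subseteq> cbox 0 1 \<and> S \<in> sets lebesgue \<and> measure lebesgue S \<ge> 3/4 \<and>
           (\<forall>y\<in>S. \<exists>p::int. 4 powr (- real (CARD('n) + 1)) * N \<le> real_of_int p \<and>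
                real_of_int p \<le> N + 2 \<and>
                (\<forall>i. dist_int (real_of_int p * y $ i) \<le> 1 / N powr (1 / real CARD('n))))"
    unfolding c_def \<delta>_def by (intro exI[of _ S]) (auto simp: S_def)
qed

end
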